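(* Fix $\theta\in(1/2,7/8]$, $h_1\in[0,1]$, $\alpha\in[0,1]$ and $[\underline h,\bar h]\subset(0,1)$. Assume the $J_X$ are independent with finite second moments and $\sum_X\mathrm{Var}(J_X)\le Cn$ for a constant $C$ independent of $n$, and let $C_P>0$ be a constant independent of $n,h_0,h_1,\alpha$ with $\mathbb E[(P_n(h_0,h_1,\alpha)-p_n(h_0,h_1,\alpha))^2]\le C_P/n$ for all parameters. Then for all sufficiently large $n$, $$\int_{\underline h}^{\bar h}dh_0\,\mathbb E\big[(\langle Q_1\rangle_{h_0,h_1,\alpha}-\mathbb E\langle Q_1\rangle_{h_0,h_1,\alpha})^2\big]\le\frac{5C_P+40}{n^{1/3}}.$$
   Context: Spins $\boldsymbol\sigma\in\{-1,1\}^n$, $\sigma_X=\prod_{i\in X}\sigma_i$. The couplings $J_X\ge0$, $X\subset\{1,\dots,n\}$, are independent random variables; $\tau_1,\dots,\tau_n$ are i.i.d. Poisson with mean $\alpha n^{\theta-1}$, independent of the couplings. Hamiltonian $\mathcal H(\boldsymbol\sigma)=-\sum_XJ_X\sigma_X-h_0\sum_i\sigma_i-h_1\sum_i\tau_i\sigma_i$, partition function $\mathcal Z_{h_0,h_1,\alpha}$, Gibbs expectation $\langle\cdot\rangle_{h_0,h_1,\alpha}$. $Q_1=\frac1n\sum_i\sigma_i$. Pressure $P_n=\frac1n\ln\mathcal Z_{h_0,h_1,\alpha}$, $p_n=\mathbb EP_n$ with $\mathbb E$ over all $J_X$ and $\boldsymbol\tau$. *)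

theory Defs
  imports "HOL-Probability.Probability"
begin

definition spins :: "nat \<Rightarrow> (nat \<Rightarrow> real) set" where
  "spins n = PiE {1..n} (\<lambda>_. {-1, 1})"

definition spin_prod :: "(nat \<Rightarrow> real) \<Rightarrow> nat set \<Rightarrow> real" where
  "spin_prod \<sigma> X = (\<Prod>i\<in>X. \<sigma> i)"

text \<open>Hamiltonian, given a realisation J of the couplings (indexed by the subsets
  X of {1..n}) and a realisation tau of the Poisson variables.\<close>
definition hamiltonian ::
  "nat \<Rightarrow> (nat set \<Rightarrow> real) \<Rightarrow> (nat \<Rightarrow> nat) \<Rightarrow> real \<Rightarrow> real \<Rightarrow> (nat \<Rightarrow> real) \<Rightarrow> real" where
  "hamiltonian n J \<tau> h0 h1 \<sigma> =
     - (\<Sum>X\<in>Pow {1..n}. J X * spin_prod \<sigma> X)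
     - h0 * (\<Sum>i\<in>{1..n}. \<sigma> i)
     - h1 * (\<Sum>i\<in>{1..n}. real (\<tau> i) * \<sigma> i)"

definition partition_fn ::
  "nat \<Rightarrow> (nat set \<Rightarrow> real) \<Rightarrow> (nat \<Rightarrow> nat) \<Rightarrow> real \<Rightarrow> real \<Rightarrow> real" where
  "partition_fn n J \<tau> h0 h1 = (\<Sum>\<sigma>\<in>spins n. exp (- hamiltonian n J \<tau> h0 h1 \<sigma>))"

definition gibbs ::
  "nat \<Rightarrow> (nat set \<Rightarrow> real) \<Rightarrow> (nat \<Rightarrow> nat) \<Rightarrow> real \<Rightarrow> real \<Rightarrow> ((nat \<Rightarrow> real) \<Rightarrow> real) \<Rightarrow> real" where
  "gibbs n J \<tau> h0 h1 f =
     (\<Sum>\<sigma>\<in>spins n. f \<sigma> * exp (- hamiltonian n J \<tau> h0 h1 \<sigma>)) / partition_fn n J \<tau> h0 h1"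

definition Q1 :: "nat \<Rightarrow> (nat \<Rightarrow> real) \<Rightarrow> real" where
  "Q1 n \<sigma> = (1 / real n) * (\<Sum>i\<in>{1..n}. \<sigma> i)"

definition pressure ::
  "nat \<Rightarrow> (nat set \<Rightarrow> real) \<Rightarrow> (nat \<Rightarrow> nat) \<Rightarrow> real \<Rightarrow> real \<Rightarrow> real" where
  "pressure n J \<tau> h0 h1 = ln (partition_fn n J \<tau> h0 h1) / real n"

definition poisson_law :: "real \<Rightarrow> nat pmf" where
  "poisson_law r = (if 0 < r then poisson_pmf r else return_pmf 0)"

definition disorder_law ::
  "(nat \<Rightarrow> nat set \<Rightarrow> real measure) \<Rightarrow> real \<Rightarrow> nat \<Rightarrow> real
     \<Rightarrow> ((nat set \<Rightarrow> real) \<times> (nat \<Rightarrow> nat)) measure" where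
  "disorder_law \<mu> \<theta> n \<alpha> =
     (PiM (Pow {1..n}) (\<lambda>X. \<mu> n X)) \<Otimes>\<^sub>M
     (PiM {1..n} (\<lambda>i. measure_pmf (poisson_law (\<alpha> * real n powr (\<theta> - 1)))))"

definition law_var :: "real measure \<Rightarrow> real" where
  "law_var m = (\<integral>x. x\<^sup>2 \<partial>m) - (\<integral>x. x \<partial>m)\<^sup>2"

end

theory Submission
  imports Defs "HOL-Real_Asymp.Real_Asymp"
begin

(* The pressure is convex in h0 with subgradient <Q1>, so <Q1> at h0 is squeezed between the
   difference quotients of P over [h0 - d, h0] and [h0, h0 + d].  Subtracting the same squeeze for
   the averages bounds the fluctuation of <Q1> by the fluctuations of P at three fields, of order
   C_P / (n d^2), plus the increment of the monotone function E<Q1> over [h0 - d, h0 + d].  As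
   |E<Q1>| <= 1, these increments integrate over h0 to at most 4 d, and d = 2 n^(-1/3) balances
   the two contributions. *)

section \<open>Spin systems\<close>

lemma ln_sum_exp_ge_weighted_mean:
  fixes w f :: "'a \<Rightarrow> real"
  assumes "finite S" "S \<noteq> {}" "\<And>s. s \<in> S \<Longrightarrow> 0 < w s"
  shows "ln (sum w S) + (\<Sum>s\<in>S. f s * w s) / sum w S \<le> ln (\<Sum>s\<in>S. w s * exp (f s))"
proof -
  define W where "W = sum w S"
  define Z where "Z = (\<Sum>s\<in>S. w s * exp (f s))"
  have W_pos: "0 < W" and Z_pos: "0 < Z"
    unfolding W_def Z_def using assms by (auto intro!: sum_pos)
  have "exp (\<Sum>s\<in>S. (w s / W) *\<^sub>R f s) \<le> (\<Sum>s\<in>S. w s / W * exp (f s))"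
    using assms W_pos exp_convex
    by (intro convex_on_sum) (auto simp: W_def sum_divide_distrib[symmetric] less_imp_le)
  hence "exp ((\<Sum>s\<in>S. f s * w s) / W) \<le> Z / W"
    by (simp add: Z_def sum_divide_distrib mult.commute)
  hence "(\<Sum>s\<in>S. f s * w s) / W \<le> ln (Z / W)"
    using W_pos Z_pos by (simp add: ln_ge_iff)
  also have "\<dots> = ln Z - ln W"
    using Z_pos W_pos by (rule ln_divide_pos)
  finally show ?thesis unfolding W_def Z_def by simp
qed

lemma finite_spins: "finite (spins n)"
  unfolding spins_def by (intro finite_PiE) auto

lemma card_spins: "card (spins n) = 2 ^ n"
  unfolding spins_def by (simp add: card_PiE numeral_2_eq_2)

lemma spins_nonempty: "spins n \<noteq> {}"
  unfolding spins_def by (simp add: PiE_eq_empty_iff)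

lemma abs_spin_eq_1: "\<sigma> \<in> spins n \<Longrightarrow> i \<in> {1..n} \<Longrightarrow> \<bar>\<sigma> i\<bar> = 1"
  unfolding spins_def by (force simp: PiE_iff)

lemma abs_spin_prod_le: "\<sigma> \<in> spins n \<Longrightarrow> X \<subseteq> {1..n} \<Longrightarrow> \<bar>spin_prod \<sigma> X\<bar> \<le> 1"
  unfolding spin_prod_def abs_prod
  by (intro prod_le_1) (auto intro!: eq_refl dest!: abs_spin_eq_1 dest: subsetD)

lemma abs_sum_spins_le: "\<sigma> \<in> spins n \<Longrightarrow> \<bar>\<Sum>i\<in>{1..n}. \<sigma> i\<bar> \<le> real n"
  by (rule order.trans[OF sum_abs]) (simp add: abs_spin_eq_1)

lemma abs_Q1_le: "\<sigma> \<in> spins n \<Longrightarrow> \<bar>Q1 n \<sigma>\<bar> \<le> 1"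
  using abs_sum_spins_le[of \<sigma> n]
  unfolding Q1_def by (cases "n = 0") (auto simp: abs_mult field_simps)

lemma partition_fn_pos: "0 < partition_fn n J \<tau> h0 h1"
  unfolding partition_fn_def using finite_spins spins_nonempty by (intro sum_pos) auto

lemma abs_gibbs_le:
  assumes "\<And>\<sigma>. \<sigma> \<in> spins n \<Longrightarrow> \<bar>f \<sigma>\<bar> \<le> B"
  shows "\<bar>gibbs n J \<tau> h0 h1 f\<bar> \<le> B"
proof -
  let ?w = "\<lambda>\<sigma>. exp (- hamiltonian n J \<tau> h0 h1 \<sigma>)"
  have "\<bar>\<Sum>\<sigma>\<in>spins n. f \<sigma> * ?w \<sigma>\<bar> \<le> (\<Sum>\<sigma>\<in>spins n. B * ?w \<sigma>)"
    by (rule order.trans[OF sum_abs], intro sum_mono) (simp add: abs_mult assms)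
  thus ?thesis using partition_fn_pos[of n J \<tau> h0 h1]
    unfolding gibbs_def partition_fn_def by (simp add: abs_div sum_distrib_left[symmetric] pos_divide_le_eq)
qed

lemma pressure_tangent:
  assumes "1 \<le> n"
  shows "d * gibbs n J \<tau> h0 h1 (Q1 n) \<le> pressure n J \<tau> (h0 + d) h1 - pressure n J \<tau> h0 h1"
proof -
  let ?w = "\<lambda>\<sigma>. exp (- hamiltonian n J \<tau> h0 h1 \<sigma>)"
  let ?f = "\<lambda>\<sigma>. d * (\<Sum>i\<in>{1..n}. \<sigma> i)"
  have Z: "partition_fn n J \<tau> h0 h1 = sum ?w (spins n)"
    unfolding partition_fn_def ..
  have Z_shift: "partition_fn n J \<tau> (h0 + d) h1 = (\<Sum>\<sigma>\<in>spins n. ?w \<sigma> * exp (?f \<sigma>))"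
    unfolding partition_fn_def hamiltonian_def by (simp add: algebra_simps flip: exp_add)
  have "(\<Sum>\<sigma>\<in>spins n. ?f \<sigma> * ?w \<sigma>) / sum ?w (spins n) = real n * (d * gibbs n J \<tau> h0 h1 (Q1 n))"
    using assms unfolding gibbs_def Z[symmetric] Q1_def
    by (simp add: sum_distrib_left sum_divide_distrib algebra_simps)
  with ln_sum_exp_ge_weighted_mean[OF finite_spins[of n] spins_nonempty, where w = ?w and f = ?f]
  have "real n * (d * gibbs n J \<tau> h0 h1 (Q1 n))
      \<le> ln (partition_fn n J \<tau> (h0 + d) h1) - ln (partition_fn n J \<tau> h0 h1)"
    unfolding Z Z_shift by simp
  thus ?thesis using assms unfolding pressure_def by (simp add: field_simps)
qed

definition hamiltonian_bound ::
  "nat \<Rightarrow> (nat set \<Rightarrow> real) \<Rightarrow> (nat \<Rightarrow> nat) \<Rightarrow> real \<Rightarrow> real \<Rightarrow> real" where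
  "hamiltonian_bound n J \<tau> h0 h1 =
     (\<Sum>X\<in>Pow {1..n}. \<bar>J X\<bar>) + real n * \<bar>h0\<bar> + h1 * (\<Sum>i\<in>{1..n}. real (\<tau> i))"

lemma abs_hamiltonian_le:
  assumes \<sigma>: "\<sigma> \<in> spins n" and "0 \<le> h1"
  shows "\<bar>hamiltonian n J \<tau> h0 h1 \<sigma>\<bar> \<le> hamiltonian_bound n J \<tau> h0 h1"
proof -
  have "\<bar>\<Sum>X\<in>Pow {1..n}. J X * spin_prod \<sigma> X\<bar> \<le> (\<Sum>X\<in>Pow {1..n}. \<bar>J X\<bar>)"
    by (rule order.trans[OF sum_abs], intro sum_mono)
       (auto simp: abs_mult intro!: mult_right_le_one_le abs_spin_prod_le[OF \<sigma>])
  moreover have "\<bar>h0 * (\<Sum>i\<in>{1..n}. \<sigma> i)\<bar> \<le> real n * \<bar>h0\<bar>"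
    using abs_sum_spins_le[OF \<sigma>] by (simp add: abs_mult mult_left_mono mult.commute)
  moreover have "\<bar>\<Sum>i\<in>{1..n}. real (\<tau> i) * \<sigma> i\<bar> \<le> (\<Sum>i\<in>{1..n}. real (\<tau> i))"
    by (rule order.trans[OF sum_abs]) (simp add: abs_mult abs_spin_eq_1[OF \<sigma>])
  hence "\<bar>h1 * (\<Sum>i\<in>{1..n}. real (\<tau> i) * \<sigma> i)\<bar> \<le> h1 * (\<Sum>i\<in>{1..n}. real (\<tau> i))"
    using \<open>0 \<le> h1\<close> by (simp add: abs_mult mult_left_mono)
  ultimately show ?thesis unfolding hamiltonian_def hamiltonian_bound_def by linarith
qed

lemma abs_pressure_le:
  assumes "1 \<le> n" and "0 \<le> h1"
  shows "\<bar>pressure n J \<tau> h0 h1\<bar> \<le> ln 2 + hamiltonian_bound n J \<tau> h0 h1 / real n"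
proof -
  let ?K = "hamiltonian_bound n J \<tau> h0 h1"
  let ?Z = "partition_fn n J \<tau> h0 h1"
  have weight_bounds: "exp (- ?K) \<le> exp (- hamiltonian n J \<tau> h0 h1 \<sigma>)"
      "exp (- hamiltonian n J \<tau> h0 h1 \<sigma>) \<le> exp ?K" if "\<sigma> \<in> spins n" for \<sigma>
    using abs_hamiltonian_le[OF that \<open>0 \<le> h1\<close>, of J \<tau> h0] by auto
  obtain \<sigma>0 where \<sigma>0: "\<sigma>0 \<in> spins n" using spins_nonempty by blast
  have "exp (- hamiltonian n J \<tau> h0 h1 \<sigma>0) \<le> ?Z"
    unfolding partition_fn_def by (rule member_le_sum[OF \<sigma>0]) (auto simp: finite_spins)
  hence "exp (- ?K) \<le> ?Z" using weight_bounds(1)[OF \<sigma>0] by linarith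
  hence lower: "- ?K \<le> ln ?Z" using partition_fn_pos by (simp add: ln_ge_iff)
  have "?Z \<le> 2 ^ n * exp ?K"
    unfolding partition_fn_def using sum_bounded_above[of "spins n", OF weight_bounds(2)]
    by (simp add: card_spins)
  hence "ln ?Z \<le> ln (2 ^ n * exp ?K)" using partition_fn_pos by simp
  hence upper: "ln ?Z \<le> real n * ln 2 + ?K" by (simp add: ln_mult ln_realpow)
  have "0 \<le> real n * ln 2" by simp
  with lower upper have "\<bar>ln ?Z\<bar> \<le> real n * ln 2 + ?K" unfolding abs_le_iff by linarith
  hence "\<bar>ln ?Z\<bar> / real n \<le> (real n * ln 2 + ?K) / real n" by (rule divide_right_mono) simp
  thus ?thesis using \<open>1 \<le> n\<close> unfolding pressure_def by (simp add: abs_div add_divide_distrib)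
qed

section \<open>Square-integrable functions\<close>

definition square_integrable :: "'a measure \<Rightarrow> ('a \<Rightarrow> real) \<Rightarrow> bool" where
  "square_integrable M f \<longleftrightarrow> f \<in> borel_measurable M \<and> integrable M (\<lambda>x. (f x)\<^sup>2)"

lemma square_add_le: "((a::real) + b)\<^sup>2 \<le> 2 * a\<^sup>2 + 2 * b\<^sup>2"
  using sum_squares_ge_zero[of "a - b" 0] by (simp add: power2_eq_square algebra_simps)

lemma square_integrable_dominated:
  assumes "square_integrable M f" "g \<in> borel_measurable M" "\<And>x. x \<in> space M \<Longrightarrow> \<bar>g x\<bar> \<le> f x"
  shows "square_integrable M g"
proof -
  have "integrable M (\<lambda>x. (g x)\<^sup>2)"
  proof (rule Bochner_Integration.integrable_bound)
    show "integrable M (\<lambda>x. (f x)\<^sup>2)" using assms(1) by (simp add: square_integrable_def)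
    have "\<bar>g x\<bar> \<le> \<bar>f x\<bar>" if "x \<in> space M" for x
      using assms(3)[OF that] by linarith
    thus "AE x in M. norm ((g x)\<^sup>2) \<le> norm ((f x)\<^sup>2)"
      by (intro AE_I2) (simp add: abs_le_square_iff)
  qed (use assms(2) in measurable)
  with assms(2) show ?thesis by (simp add: square_integrable_def)
qed

lemma square_integrable_add:
  assumes "square_integrable M f" "square_integrable M g"
  shows "square_integrable M (\<lambda>x. f x + g x)"
proof -
  have [measurable]: "f \<in> borel_measurable M" "g \<in> borel_measurable M"
    using assms by (auto simp: square_integrable_def)
  have "integrable M (\<lambda>x. (f x + g x)\<^sup>2)"
  proof (rule Bochner_Integration.integrable_bound)
    show "integrable M (\<lambda>x. 2 * (f x)\<^sup>2 + 2 * (g x)\<^sup>2)"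
      using assms by (auto simp: square_integrable_def)
    show "AE x in M. norm ((f x + g x)\<^sup>2) \<le> norm (2 * (f x)\<^sup>2 + 2 * (g x)\<^sup>2)"
      by (intro AE_I2) (simp add: square_add_le)
  qed measurable
  thus ?thesis by (simp add: square_integrable_def)
qed

lemma square_integrable_cmult: "square_integrable M f \<Longrightarrow> square_integrable M (\<lambda>x. c * f x)"
  unfolding square_integrable_def power_mult_distrib by (auto intro: integrable_mult_right)

lemma square_integrable_const: "finite_measure M \<Longrightarrow> square_integrable M (\<lambda>x. c)"
  unfolding square_integrable_def by (auto intro: finite_measure.integrable_const)

lemma square_integrable_sum:
  assumes "finite_measure M" "finite I" "\<And>i. i \<in> I \<Longrightarrow> square_integrable M (f i)"
  shows "square_integrable M (\<lambda>x. \<Sum>i\<in>I. f i x)"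
  using assms(2,3)
  by (induction I rule: finite_induct) (auto intro: square_integrable_add square_integrable_const[OF assms(1)])

lemma integrable_if_square_integrable:
  "finite_measure M \<Longrightarrow> square_integrable M f \<Longrightarrow> integrable M f"
  unfolding square_integrable_def by (auto intro: finite_measure.square_integrable_imp_integrable)

lemma integrable_centred_square:
  assumes "finite_measure M" "square_integrable M f"
  shows "integrable M (\<lambda>x. (f x - c)\<^sup>2)"
  using square_integrable_add[OF assms(2) square_integrable_const[OF assms(1), of "- c"]]
  by (simp add: square_integrable_def)

section \<open>Integration over the field\<close>

lemma mono_integrable_on: "mono (m :: real \<Rightarrow> real) \<Longrightarrow> m integrable_on {a..b}"
  by (rule integrable_on_mono_on) (auto simp: mono_on_def mono_def)

lemma abs_integral_le_length:
  fixes m :: "real \<Rightarrow> real"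
  assumes "mono m" "\<And>x. \<bar>m x\<bar> \<le> 1" "a \<le> b"
  shows "\<bar>integral {a..b} m\<bar> \<le> b - a"
  using has_integral_bound[of 1 m "integral {a..b} m" a b] mono_integrable_on[OF assms(1)] assms(2,3)
  by (simp add: integrable_integral)

lemma integral_shift_difference_le:
  fixes m :: "real \<Rightarrow> real"
  assumes mono: "mono m" and bounded: "\<And>x. \<bar>m x\<bar> \<le> 1" and "0 \<le> d" "a \<le> b"
  shows "integral {a..b} (\<lambda>h. m (h + d)) - integral {a..b} (\<lambda>h. m (h - d)) \<le> 4 * d"
proof -
  let ?I = "\<lambda>x y. integral {x..y} m"
  have "integral {a..b} (\<lambda>h. m (h + d)) = ?I (a + d) (b + d)"
    using integral_shift_Icc_real[of a b m d] by (simp add: o_def add.commute)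
  moreover have "integral {a..b} (\<lambda>h. m (h - d)) = ?I (a - d) (b - d)"
    using integral_shift_Icc_real[of a b m "- d"] by (simp add: o_def add.commute)
  moreover have "?I (a - d) (a + d) + ?I (a + d) (b + d) = ?I (a - d) (b - d) + ?I (b - d) (b + d)"
    using assms(3,4) mono_integrable_on[OF mono, of "a - d" "b + d"]
    by (simp add: Henstock_Kurzweil_Integration.integral_combine)
  moreover have "\<bar>?I (a - d) (a + d)\<bar> \<le> 2 * d" "\<bar>?I (b - d) (b + d)\<bar> \<le> 2 * d"
    using abs_integral_le_length[OF mono bounded, of "a - d" "a + d"]
      abs_integral_le_length[OF mono bounded, of "b - d" "b + d"] \<open>0 \<le> d\<close> by simp_all
  ultimately show ?thesis by (simp add: abs_le_iff)
qed

lemma integral_le_of_le_increment: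
  fixes m f :: "real \<Rightarrow> real"
  assumes mono: "mono m" and bounded: "\<And>x. \<bar>m x\<bar> \<le> 1"
    and "0 \<le> d" "a \<le> b" "b - a \<le> 1" "0 \<le> c" "0 \<le> k"
    and f_le: "\<And>h. h \<in> {a..b} \<Longrightarrow> f h \<le> c + k * (m (h + d) - m (h - d))"
  shows "integral {a..b} f \<le> c + 4 * k * d"
proof (cases "f integrable_on {a..b}")
  case False
  thus ?thesis using assms by (simp add: not_integrable_integral)
next
  case True
  have integrable_shift: "(\<lambda>h. m (h + e)) integrable_on {a..b}" for e
    using mono by (intro mono_integrable_on) (auto simp: mono_def)
  have increment: "(\<lambda>h. m (h + d) - m (h - d)) integrable_on {a..b}"
    using integrable_diff[OF integrable_shift[of d] integrable_shift[of "- d"]] by simp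
  have scaled: "(\<lambda>h. k * (m (h + d) - m (h - d))) integrable_on {a..b}"
    using integrable_on_cmult_left[OF increment, of k] by simp
  have "integral {a..b} f \<le> integral {a..b} (\<lambda>h. c + k * (m (h + d) - m (h - d)))"
    using f_le by (intro integral_le True integrable_add integrable_const_ivl scaled) auto
  also have "\<dots> = (b - a) * c + k * (integral {a..b} (\<lambda>h. m (h + d)) - integral {a..b} (\<lambda>h. m (h - d)))"
    using \<open>a \<le> b\<close> integrable_shift[of d] integrable_shift[of "- d"]
    by (simp add: integral_add[OF integrable_const_ivl scaled] integral_diff)
  also have "\<dots> \<le> 1 * c + k * (4 * d)"
    using assms integral_shift_difference_le[OF mono bounded, of d a b]
    by (intro add_mono mult_right_mono mult_left_mono) auto
  finally show ?thesis by simp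
qed

section \<open>Convex families of random functions\<close>

lemma square_difference_quotient_add_le:
  fixes a b d e :: real
  shows "((a - b) / d + e)\<^sup>2 \<le> 4 * (a\<^sup>2 + b\<^sup>2) / d\<^sup>2 + 2 * e\<^sup>2"
proof -
  have "((a - b) / d)\<^sup>2 = (a + - b)\<^sup>2 / d\<^sup>2" by (simp add: power_divide)
  also have "\<dots> \<le> 2 * (a\<^sup>2 + b\<^sup>2) / d\<^sup>2"
    using square_add_le[of a "- b"] by (intro divide_right_mono) auto
  moreover have "4 * (a\<^sup>2 + b\<^sup>2) / d\<^sup>2 = 2 * (2 * (a\<^sup>2 + b\<^sup>2) / d\<^sup>2)" by simp
  ultimately show ?thesis
    using square_add_le[of "(a - b) / d" e] by linarith
qed

lemma square_le_of_sandwich: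
  fixes y a b c d s t :: real
  assumes lower: "(b - c) / d - t \<le> y" and upper: "y \<le> (a - b) / d + s"
    and s: "0 \<le> s" "s \<le> 2" and t: "0 \<le> t" "t \<le> 2"
  shows "y\<^sup>2 \<le> 4 * (a\<^sup>2 + 2 * b\<^sup>2 + c\<^sup>2) / d\<^sup>2 + 4 * (s + t)"
proof -
  have "s\<^sup>2 \<le> 2 * s" "t\<^sup>2 \<le> 2 * t"
    using s t by (simp_all add: power2_eq_square mult_right_mono)
  have "y\<^sup>2 \<le> ((a - b) / d + s)\<^sup>2 + ((b - c) / d + - t)\<^sup>2"
  proof (cases "0 \<le> y")
    case True
    with upper have "y\<^sup>2 \<le> ((a - b) / d + s)\<^sup>2" by (intro power_mono) auto
    thus ?thesis by (simp add: add_increasing2)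
  next
    case False
    with lower have "(- y)\<^sup>2 \<le> (- ((b - c) / d + - t))\<^sup>2" by (intro power_mono) auto
    thus ?thesis by (simp add: power2_commute add_increasing)
  qed
  also have "\<dots> \<le> (4 * (a\<^sup>2 + b\<^sup>2) / d\<^sup>2 + 2 * s\<^sup>2)
      + (4 * (b\<^sup>2 + c\<^sup>2) / d\<^sup>2 + 2 * (- t)\<^sup>2)"
    by (intro add_mono square_difference_quotient_add_le)
  also have "\<dots> \<le> 4 * (a\<^sup>2 + 2 * b\<^sup>2 + c\<^sup>2) / d\<^sup>2 + 4 * (s + t)"
    using \<open>s\<^sup>2 \<le> 2 * s\<close> \<open>t\<^sup>2 \<le> 2 * t\<close>
    by (simp add: add_divide_distrib[symmetric] algebra_simps)
  finally show ?thesis .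
qed

text \<open>For every sample \<open>\<omega>\<close>, \<open>G h \<omega>\<close> is a subgradient of the convex function
  \<open>h \<mapsto> P h \<omega>\<close>; this is all that is used of the pressure and the magnetisation.\<close>

locale subgradient_family = prob_space M for M :: "'a measure" +
  fixes P G :: "real \<Rightarrow> 'a \<Rightarrow> real"
  assumes square_integrable_P: "square_integrable M (P h)"
    and G_measurable: "G h \<in> borel_measurable M"
    and abs_G_le_1: "\<bar>G h \<omega>\<bar> \<le> 1"
    and subgradient: "d * G h \<omega> \<le> P (h + d) \<omega> - P h \<omega>"
begin

lemma integrable_P: "integrable M (P h)"
  using integrable_if_square_integrable[OF finite_measure_axioms square_integrable_P] .

lemma integrable_G: "integrable M (G h)"
  by (rule integrable_const_bound[where B = 1]) (auto simp: abs_G_le_1 G_measurable)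

lemma G_mono:
  assumes "h \<le> h'"
  shows "G h \<omega> \<le> G h' \<omega>"
proof -
  have "(h' - h) * G h \<omega> \<le> P h' \<omega> - P h \<omega>"
    using subgradient[of "h' - h" h \<omega>] by simp
  also have "\<dots> \<le> (h' - h) * G h' \<omega>"
    using subgradient[of "h - h'" h' \<omega>] by (simp add: algebra_simps)
  finally have "(h' - h) * G h \<omega> \<le> (h' - h) * G h' \<omega>" .
  thus ?thesis using assms by (cases "h = h'") (auto simp: mult_le_cancel_left)
qed

lemma mono_expectation_G: "mono (\<lambda>h. expectation (G h))"
  by (auto intro!: monoI integral_mono integrable_G G_mono)

lemma abs_expectation_G_le_1: "\<bar>expectation (G h)\<bar> \<le> 1"
proof -
  have "- 1 \<le> G h \<omega> \<and> G h \<omega> \<le> 1" for \<omega>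
    using abs_G_le_1[of h \<omega>] by linarith
  thus ?thesis
    using integral_le_const[OF integrable_G, where c = 1] integral_ge_const[OF integrable_G, where c = "- 1"]
    by (auto simp: abs_le_iff)
qed

lemma expectation_subgradient: "d * expectation (G h) \<le> expectation (P (h + d)) - expectation (P h)"
proof -
  have "d * expectation (G h) = expectation (\<lambda>\<omega>. d * G h \<omega>)" by simp
  also have "\<dots> \<le> expectation (\<lambda>\<omega>. P (h + d) \<omega> - P h \<omega>)"
    by (intro integral_mono integrable_mult_right integrable_G Bochner_Integration.integrable_diff
        integrable_P subgradient)
  also have "\<dots> = expectation (P (h + d)) - expectation (P h)"
    by (rule Bochner_Integration.integral_diff[OF integrable_P integrable_P])
  finally show ?thesis .
qed

text \<open>The subgradient inequality at \<open>h\<close> and \<open>h \<plusminus> d\<close> squeezes \<open>G h \<omega>\<close> between the backward and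
  forward difference quotients of \<open>P\<close>, and likewise for the expectations.\<close>

lemma centred_G_square_le:
  assumes d: "0 < d"
  defines "X \<equiv> \<lambda>h' \<omega>. P h' \<omega> - expectation (P h')"
  shows "(G h \<omega> - expectation (G h))\<^sup>2
    \<le> 4 * ((X (h + d) \<omega>)\<^sup>2 + 2 * (X h \<omega>)\<^sup>2 + (X (h - d) \<omega>)\<^sup>2) / d\<^sup>2
      + 4 * (expectation (G (h + d)) - expectation (G (h - d)))"
proof -
  define m where "m h' = expectation (G h')" for h'
  define s where "s = m (h + d) - m h"
  define t where "t = m h - m (h - d)"
  have s: "0 \<le> s" "s \<le> 2" and t: "0 \<le> t" "t \<le> 2"
    using mono_expectation_G[THEN monoD, of h "h + d"] mono_expectation_G[THEN monoD, of "h - d" h]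
      abs_expectation_G_le_1[of h] abs_expectation_G_le_1[of "h + d"]
      abs_expectation_G_le_1[of "h - d"] d
    by (auto simp: s_def t_def m_def abs_le_iff)
  have "(G h \<omega> - m h)\<^sup>2
      \<le> 4 * ((X (h + d) \<omega>)\<^sup>2 + 2 * (X h \<omega>)\<^sup>2 + (X (h - d) \<omega>)\<^sup>2) / d\<^sup>2 + 4 * (s + t)"
  proof (rule square_le_of_sandwich[OF _ _ s t])
    show "(X h \<omega> - X (h - d) \<omega>) / d - t \<le> G h \<omega> - m h"
      using subgradient[of "- d" h \<omega>] expectation_subgradient[of d "h - d"] d
      by (simp add: X_def t_def m_def field_simps)
    show "G h \<omega> - m h \<le> (X (h + d) \<omega> - X h \<omega>) / d + s"
      using subgradient[of d h \<omega>] expectation_subgradient[of "- d" "h + d"] d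
      by (simp add: X_def s_def m_def field_simps)
  qed
  thus ?thesis by (simp add: s_def t_def m_def)
qed

lemma variance_G_le:
  assumes "0 < d"
    and V: "variance (P (h + d)) \<le> V" "variance (P h) \<le> V" "variance (P (h - d)) \<le> V"
  shows "variance (G h)
    \<le> 16 * V / d\<^sup>2 + 4 * (expectation (G (h + d)) - expectation (G (h - d)))"
proof -
  define X where "X h' \<omega> = P h' \<omega> - expectation (P h')" for h' \<omega>
  define K where "K = 4 * (expectation (G (h + d)) - expectation (G (h - d)))"
  have integrable_X2: "integrable M (\<lambda>\<omega>. (X h' \<omega>)\<^sup>2)" for h'
    unfolding X_def by (rule integrable_centred_square[OF finite_measure_axioms square_integrable_P])
  have "square_integrable M (G h)"
    by (rule square_integrable_dominated[OF square_integrable_const[OF finite_measure_axioms, of 1]])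
       (auto simp: G_measurable abs_G_le_1)
  hence "variance (G h) \<le> expectation (\<lambda>\<omega>.
      4 * ((X (h + d) \<omega>)\<^sup>2 + 2 * (X h \<omega>)\<^sup>2 + (X (h - d) \<omega>)\<^sup>2) / d\<^sup>2 + K)"
    using centred_G_square_le[OF \<open>0 < d\<close>] unfolding X_def K_def
    by (intro integral_mono integrable_centred_square[OF finite_measure_axioms]
        Bochner_Integration.integrable_add integrable_divide integrable_mult_right
        integrable_X2[unfolded X_def]) auto
  also have "\<dots> = 4 * (variance (P (h + d)) + 2 * variance (P h) + variance (P (h - d))) / d\<^sup>2 + K"
    using integrable_X2 by (simp add: X_def prob_space)
  also have "\<dots> \<le> 4 * (V + 2 * V + V) / d\<^sup>2 + K"
    using V by (intro add_mono divide_right_mono) auto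
  finally show ?thesis by (simp add: K_def)
qed

lemma integral_variance_G_le:
  assumes "0 < d" "a \<le> b" "b - a \<le> 1" "0 \<le> V"
    and "\<And>h. h \<in> {a - d..b + d} \<Longrightarrow> variance (P h) \<le> V"
  shows "integral {a..b} (\<lambda>h. variance (G h)) \<le> 16 * V / d\<^sup>2 + 16 * d"
proof -
  have "integral {a..b} (\<lambda>h. variance (G h)) \<le> 16 * V / d\<^sup>2 + 4 * 4 * d"
    using assms
    by (intro integral_le_of_le_increment[OF mono_expectation_G abs_expectation_G_le_1] variance_G_le)
       auto
  thus ?thesis by simp
qed

end

section \<open>The disorder distribution\<close>

lemma distr_pair_snd:
  assumes "prob_space A" "prob_space B"
  shows "distr (A \<Otimes>\<^sub>M B) B snd = B"
proof (intro measure_eqI)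
  interpret A: prob_space A by fact
  interpret B: prob_space B by fact
  fix S assume S: "S \<in> sets (distr (A \<Otimes>\<^sub>M B) B snd)"
  hence "emeasure (distr (A \<Otimes>\<^sub>M B) B snd) S = emeasure (A \<Otimes>\<^sub>M B) (space A \<times> S)"
    by (auto simp: emeasure_distr space_pair_measure dest: sets.sets_into_space
        intro!: arg_cong2[where f = emeasure])
  with S show "emeasure (distr (A \<Otimes>\<^sub>M B) B snd) S = emeasure B S"
    by (simp add: B.emeasure_pair_measure_Times A.emeasure_space_1)
qed simp

lemma integrable_pair_fst:
  fixes f :: "'a \<Rightarrow> real"
  assumes "prob_space B" "integrable A f"
  shows "integrable (A \<Otimes>\<^sub>M B) (\<lambda>\<omega>. f (fst \<omega>))"
  using integrable_distr_eq[OF measurable_fst, of f A B] assms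
  by (simp add: prob_space.distr_pair_fst)

lemma integrable_pair_snd:
  fixes f :: "'b \<Rightarrow> real"
  assumes "prob_space A" "prob_space B" "integrable B f"
  shows "integrable (A \<Otimes>\<^sub>M B) (\<lambda>\<omega>. f (snd \<omega>))"
  using integrable_distr_eq[OF measurable_snd, of f B A] assms
  by (simp add: distr_pair_snd)

lemma integrable_PiM_component:
  fixes f :: "'a \<Rightarrow> real"
  assumes "\<And>j. j \<in> I \<Longrightarrow> prob_space (M j)" "i \<in> I" "integrable (M i) f"
  shows "integrable (PiM I M) (\<lambda>\<omega>. f (\<omega> i))"
  using integrable_distr_eq[OF measurable_component_singleton[OF assms(2)], of f M] assms
  by (simp add: distr_PiM_component)

lemma integrable_poisson_law_square: "integrable (measure_pmf (poisson_law r)) (\<lambda>k. (real k)\<^sup>2)"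
proof (cases "0 < r")
  case False
  thus ?thesis by (simp add: poisson_law_def integrable_measure_pmf_finite)
next
  case True
  have "(real k)\<^sup>2 \<le> 4 ^ k" for k
  proof -
    have "real k \<le> 2 ^ k" using less_exp[of k] by (simp add: less_imp_le)
    hence "(real k)\<^sup>2 \<le> (2 ^ k)\<^sup>2" by (intro power_mono) auto
    also have "((2::real) ^ k)\<^sup>2 = 4 ^ k" by (simp add: power2_eq_square flip: power_mult_distrib)
    finally show ?thesis .
  qed
  hence "exp (- r) * r ^ k / fact k * (real k)\<^sup>2 \<le> exp (- r) * r ^ k / fact k * 4 ^ k" for k
    using True by (intro mult_left_mono) auto
  hence bound: "norm (pmf (poisson_pmf r) k * (real k)\<^sup>2) \<le> exp (- r) * ((4 * r) ^ k / fact k)" for k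
    using True by (simp add: power_mult_distrib mult_ac)
  have "summable (\<lambda>k. exp (- r) * ((4 * r) ^ k / fact k))"
    using summable_exp[of "4 * r"] by (intro summable_mult) (simp add: divide_inverse mult.commute)
  hence "summable (\<lambda>k. pmf (poisson_pmf r) k * (real k)\<^sup>2)"
    by (rule summable_comparison_test'[OF _ bound])
  hence "integrable (count_space UNIV) (\<lambda>k. pmf (poisson_pmf r) k *\<^sub>R (real k)\<^sup>2)"
    by (simp add: integrable_count_space_nat_iff)
  thus ?thesis
    using True by (simp add: poisson_law_def measure_pmf_eq_density integrable_density)
qed

locale disorder_space =
  fixes \<mu> :: "nat set \<Rightarrow> real measure" and n :: nat and r :: real
  assumes prob_space_coupling: "X \<in> Pow {1..n} \<Longrightarrow> prob_space (\<mu> X)"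
    and sets_coupling: "X \<in> Pow {1..n} \<Longrightarrow> sets (\<mu> X) = sets borel"
    and integrable_coupling_square: "X \<in> Pow {1..n} \<Longrightarrow> integrable (\<mu> X) (\<lambda>x. x\<^sup>2)"
begin

abbreviation law_J where "law_J \<equiv> PiM (Pow {1..n}) \<mu>"
abbreviation law_\<tau> where "law_\<tau> \<equiv> PiM {1..n} (\<lambda>i. measure_pmf (poisson_law r))"
abbreviation law where "law \<equiv> law_J \<Otimes>\<^sub>M law_\<tau>"

lemma prob_space_law_J: "prob_space law_J"
  by (intro prob_space_PiM prob_space_coupling)

lemma prob_space_law_\<tau>: "prob_space law_\<tau>"
  by (intro prob_space_PiM measure_pmf.prob_space_axioms)

lemma prob_space_law: "prob_space law"
  by (intro prob_space_pair prob_space_law_J prob_space_law_\<tau>)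

lemma measurable_coupling [measurable]:
  "X \<in> Pow {1..n} \<Longrightarrow> (\<lambda>\<omega>. fst \<omega> X) \<in> borel_measurable law"
  using measurable_component_singleton[of X "Pow {1..n}" \<mu>] sets_coupling[of X]
  by (simp add: measurable_def space_borel)

lemma measurable_poisson [measurable]:
  "i \<in> {1..n} \<Longrightarrow> (\<lambda>\<omega>. real (snd \<omega> i)) \<in> borel_measurable law"
  by measurable

lemma measurable_hamiltonian:
  "(\<lambda>\<omega>. hamiltonian n (fst \<omega>) (snd \<omega>) h0 h1 \<sigma>) \<in> borel_measurable law"
  unfolding hamiltonian_def by measurable

lemma measurable_partition_fn:
  "(\<lambda>\<omega>. partition_fn n (fst \<omega>) (snd \<omega>) h0 h1) \<in> borel_measurable law"
  unfolding partition_fn_def using measurable_hamiltonian by measurable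

lemma measurable_pressure: "(\<lambda>\<omega>. pressure n (fst \<omega>) (snd \<omega>) h0 h1) \<in> borel_measurable law"
  unfolding pressure_def using measurable_partition_fn by measurable

lemma measurable_gibbs: "(\<lambda>\<omega>. gibbs n (fst \<omega>) (snd \<omega>) h0 h1 f) \<in> borel_measurable law"
  unfolding gibbs_def using measurable_hamiltonian measurable_partition_fn by measurable

lemma square_integrable_hamiltonian_bound:
  "square_integrable law (\<lambda>\<omega>. hamiltonian_bound n (fst \<omega>) (snd \<omega>) h0 h1)"
proof -
  have finite_law: "finite_measure law"
    using prob_space_law by (simp add: prob_space_def)
  have "square_integrable law (\<lambda>\<omega>. \<bar>fst \<omega> X\<bar>)" if X: "X \<in> Pow {1..n}" for X
  proof -
    have "integrable law_J (\<lambda>\<omega>. (\<omega> X)\<^sup>2)"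
      using X by (intro integrable_PiM_component prob_space_coupling integrable_coupling_square)
    hence "integrable law (\<lambda>\<omega>. (fst \<omega> X)\<^sup>2)"
      by (rule integrable_pair_fst[OF prob_space_law_\<tau>])
    with measurable_coupling[OF X] show ?thesis
      by (simp add: square_integrable_def borel_measurable_abs)
  qed
  moreover have "square_integrable law (\<lambda>\<omega>. real (snd \<omega> i))" if i: "i \<in> {1..n}" for i
  proof -
    have "integrable law_\<tau> (\<lambda>\<omega>. (real (\<omega> i))\<^sup>2)"
      using i by (intro integrable_PiM_component measure_pmf.prob_space_axioms integrable_poisson_law_square)
    hence "integrable law (\<lambda>\<omega>. (real (snd \<omega> i))\<^sup>2)"
      by (rule integrable_pair_snd[OF prob_space_law_J prob_space_law_\<tau>])
    with measurable_poisson[OF i] show ?thesis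
      by (simp add: square_integrable_def)
  qed
  ultimately show ?thesis
    unfolding hamiltonian_bound_def
    by (intro square_integrable_add square_integrable_cmult square_integrable_sum
        square_integrable_const finite_law) auto
qed

lemma square_integrable_pressure:
  assumes "1 \<le> n" "0 \<le> h1"
  shows "square_integrable law (\<lambda>\<omega>. pressure n (fst \<omega>) (snd \<omega>) h0 h1)"
proof (rule square_integrable_dominated[OF _ measurable_pressure])
  show "square_integrable law (\<lambda>\<omega>. ln 2 + inverse (real n) * hamiltonian_bound n (fst \<omega>) (snd \<omega>) h0 h1)"
    using prob_space_law
    by (intro square_integrable_add square_integrable_const square_integrable_cmult
        square_integrable_hamiltonian_bound) (simp add: prob_space_def)
qed (use abs_pressure_le[OF assms] in \<open>simp add: field_simps\<close>)

end

lemma fluctuation_bound_at_cube_root_scale: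
  fixes n :: nat and CP :: real
  assumes "1 \<le> n" "0 < CP"
  shows "16 * (CP / real n) / (2 / real n powr (1/3))\<^sup>2 + 16 * (2 / real n powr (1/3))
    \<le> (5 * CP + 40) / real n powr (1/3)"
proof -
  define t where "t = real n powr (1/3)"
  have t: "0 < t" using assms by (simp add: t_def)
  have "real n = t ^ 3"
    using assms by (simp add: t_def powr_realpow[symmetric] powr_powr)
  hence "16 * (CP / real n) / (2 / t)\<^sup>2 + 16 * (2 / t) = (4 * CP + 32) / t"
    using t by (simp add: field_simps power2_eq_square power3_eq_cube)
  also have "\<dots> \<le> (5 * CP + 40) / t"
    using t assms by (intro divide_right_mono) auto
  finally show ?thesis unfolding t_def .
qed

theorem lemma3p2:
  fixes \<theta> h1 \<alpha> hlo hhi C CP :: real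
    and \<mu> :: "nat \<Rightarrow> nat set \<Rightarrow> real measure"
  assumes theta: "1/2 < \<theta>" "\<theta> \<le> 7/8"
    and h1: "0 \<le> h1" "h1 \<le> 1"
    and alpha: "0 \<le> \<alpha>" "\<alpha> \<le> 1"
    and hint: "0 < hlo" "hlo \<le> hhi" "hhi < 1"
    and mu_prob: "\<And>n X. X \<in> Pow {1..n} \<Longrightarrow> prob_space (\<mu> n X)"
    and mu_sets: "\<And>n X. X \<in> Pow {1..n} \<Longrightarrow> sets (\<mu> n X) = sets borel"
    and mu_nonneg: "\<And>n X. X \<in> Pow {1..n} \<Longrightarrow> AE x in \<mu> n X. 0 \<le> x"
    and mu_L2: "\<And>n X. X \<in> Pow {1..n} \<Longrightarrow> integrable (\<mu> n X) (\<lambda>x. x\<^sup>2)"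
    and var_bound: "\<And>n. (\<Sum>X\<in>Pow {1..n}. law_var (\<mu> n X)) \<le> C * real n"
    and CP_pos: "0 < CP"
    and conc: "\<And>n h0 h1' \<alpha>'. 0 < h0 \<Longrightarrow> h0 < 1 \<Longrightarrow> 0 \<le> h1' \<Longrightarrow> h1' \<le> 1
        \<Longrightarrow> 0 \<le> \<alpha>' \<Longrightarrow> \<alpha>' \<le> 1 \<Longrightarrow>
        (\<integral>\<omega>. (pressure n (fst \<omega>) (snd \<omega>) h0 h1'
               - (\<integral>\<omega>'. pressure n (fst \<omega>') (snd \<omega>') h0 h1' \<partial>disorder_law \<mu> \<theta> n \<alpha>'))\<^sup>2
           \<partial>disorder_law \<mu> \<theta> n \<alpha>') \<le> CP / real n"
  shows "\<forall>\<^sub>F n in sequentially.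
    integral {hlo..hhi} (\<lambda>h0.
      (\<integral>\<omega>. (gibbs n (fst \<omega>) (snd \<omega>) h0 h1 (Q1 n)
             - (\<integral>\<omega>'. gibbs n (fst \<omega>') (snd \<omega>') h0 h1 (Q1 n) \<partial>disorder_law \<mu> \<theta> n \<alpha>))\<^sup>2
         \<partial>disorder_law \<mu> \<theta> n \<alpha>))
    \<le> (5 * CP + 40) / real n powr (1/3)"
proof -
  define d where "d n = 2 / real n powr (1/3)" for n :: nat
  have "(d \<longlongrightarrow> 0) sequentially" unfolding d_def by real_asymp
  hence "\<forall>\<^sub>F n in sequentially. d n < min hlo (1 - hhi)"
    using hint by (intro order_tendstoD(2)) auto
  moreover have "\<forall>\<^sub>F n in sequentially. 1 \<le> n" by (rule eventually_ge_at_top)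
  ultimately show ?thesis
  proof eventually_elim
    case (elim n)
    hence n: "1 \<le> n" and d: "0 < d n" "d n < hlo" "d n < 1 - hhi" by (auto simp: d_def)
    interpret D: disorder_space "\<mu> n" n "\<alpha> * real n powr (\<theta> - 1)"
      by (intro disorder_space.intro mu_prob mu_sets mu_L2)
    have law: "disorder_law \<mu> \<theta> n \<alpha> = D.law" by (simp add: disorder_law_def)
    interpret F: subgradient_family D.law "\<lambda>h \<omega>. pressure n (fst \<omega>) (snd \<omega>) h h1"
        "\<lambda>h \<omega>. gibbs n (fst \<omega>) (snd \<omega>) h h1 (Q1 n)"
      using D.prob_space_law D.square_integrable_pressure[OF n h1(1)] D.measurable_gibbs
        abs_gibbs_le[OF abs_Q1_le] pressure_tangent[OF n]
      by (intro subgradient_family.intro subgradient_family_axioms.intro) auto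
    have variance_pressure: "F.variance (\<lambda>\<omega>. pressure n (fst \<omega>) (snd \<omega>) h h1) \<le> CP / real n"
      if "h \<in> {hlo - d n..hhi + d n}" for h
      using conc[of h h1 \<alpha> n] that hint d h1 alpha unfolding law by auto
    have "integral {hlo..hhi} (\<lambda>h. F.variance (\<lambda>\<omega>. gibbs n (fst \<omega>) (snd \<omega>) h h1 (Q1 n)))
        \<le> 16 * (CP / real n) / (d n)\<^sup>2 + 16 * d n"
      using hint d CP_pos variance_pressure by (intro F.integral_variance_G_le) auto
    also have "\<dots> \<le> (5 * CP + 40) / real n powr (1/3)"
      unfolding d_def by (rule fluctuation_bound_at_cube_root_scale[OF n CP_pos])
    finally show ?case unfolding law .
  qed
qed

end
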